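(* Let $M \in \mathbb{Z}^+$ and let $p_1$ be a real number with $0.5 \le p_1 < \frac{M+1.5}{M+3}$. Set $p_2 = 1 - p_1$ and $\delta = \frac{p_1 - 0.5}{M}$, and define for $m \in \{0,1,\dots,M\}$ the prior weights $$\omega_{\mathrm{FE}}(m) = p_1 - \delta m, \qquad \omega_{\mathrm{HPO}}(m) = p_2 + \delta m.$$ Define integer sequences $N_{\mathrm{FE}}(m), N_{\mathrm{HPO}}(m)$ for $m = 0,1,\dots,M$ by $N_{\mathrm{FE}}(0) = N_{\mathrm{HPO}}(0) = 0$ and, for $0 \le m \le M-1$, $$I(m+1) = \begin{cases} 1, & \text{if } \dfrac{\omega_{\mathrm{FE}}(m)}{1+N_{\mathrm{FE}}(m)} > \dfrac{\omega_{\mathrm{HPO}}(m)}{1+N_{\mathrm{HPO}}(m)},\\[2mm] 0, & \text{otherwise,}\end{cases}$$ $$N_{\mathrm{FE}}(m+1) = N_{\mathrm{FE}}(m) + I(m+1), \qquad N_{\mathrm{HPO}}(m+1) = N_{\mathrm{HPO}}(m) + 1 - I(m+1).$$ Then $$N_{\mathrm{FE}}(M),\ N_{\mathrm{HPO}}(M) \in \left\{ \left\lfloor \tfrac{M}{2} \right\rfloor, \left\lceil \tfrac{M}{2} \right\rceil \right\}.$$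
   Context: This models a two-armed selector that, at each of $M$ iterations, chooses between two actions FE and HPO. The selection rule above is the reduction, under a neutral reward signal (equal constant exploitation values for both arms), of the rule choosing $\arg\max_{a\in\{\mathrm{FE},\mathrm{HPO}\}} \omega_a(m)\frac{\sqrt{N_{\mathrm{FE}}(m)+N_{\mathrm{HPO}}(m)}}{1+N_a(m)}$ after dividing out the common factor; $I(m+1)=1$ means FE is chosen at iteration $m+1$, and ties are resolved in favor of HPO. $N_a(m)$ is the number of times action $a$ has been chosen in the first $m$ iterations, so $N_{\mathrm{FE}}(m)+N_{\mathrm{HPO}}(m)=m$. *)

theory Defs
  imports Complex_Main
begin

definition delta :: "real \<Rightarrow> nat \<Rightarrow> real" where
  "delta p1 M = (p1 - 1/2) / real M"

definition omega_FE :: "real \<Rightarrow> nat \<Rightarrow> nat \<Rightarrow> real" where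
  "omega_FE p1 M m = p1 - delta p1 M * real m"

definition omega_HPO :: "real \<Rightarrow> nat \<Rightarrow> nat \<Rightarrow> real" where
  "omega_HPO p1 M m = (1 - p1) + delta p1 M * real m"

fun counts :: "real \<Rightarrow> nat \<Rightarrow> nat \<Rightarrow> nat \<times> nat" where
  "counts p1 M 0 = (0, 0)"
| "counts p1 M (Suc m) =
     (let (nf, nh) = counts p1 M m in
      if omega_FE p1 M m / (1 + real nf) > omega_HPO p1 M m / (1 + real nh)
      then (nf + 1, nh) else (nf, nh + 1))"

definition N_FE :: "real \<Rightarrow> nat \<Rightarrow> nat \<Rightarrow> nat" where
  "N_FE p1 M m = fst (counts p1 M m)"

definition N_HPO :: "real \<Rightarrow> nat \<Rightarrow> nat \<Rightarrow> nat" where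
  "N_HPO p1 M m = snd (counts p1 M m)"

end

theory Submission
  imports Defs
begin

text \<open>Since the two prior weights sum to 1 and the two counts sum to \<open>m\<close>, FE is chosen at
  step \<open>m + 1\<close> exactly when \<open>N_FE(m)\<close> lies below the threshold \<open>\<omega>_FE(m)(m + 2) - 1\<close>.
  This threshold starts at \<open>2p\<^sub>1 - 1 \<in> [0, 1]\<close> and increases by at most 1 per step, and a
  counter incremented exactly while it lies below such a threshold stays between the
  threshold and the threshold plus 1. At the last step the threshold is
  \<open>(M - 1)/2 + \<delta>(M + 1)\<close>, which lies in \<open>[(M - 1)/2, M/2)\<close> as soon as
  \<open>p\<^sub>1 < (2M + 1)/(2M + 2)\<close>, a weaker condition than the assumed one.\<close>

definition FE_threshold :: "real \<Rightarrow> nat \<Rightarrow> nat \<Rightarrow> real" where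
  "FE_threshold p1 M m = omega_FE p1 M m * (real m + 2) - 1"

lemma N_FE_add_N_HPO: "N_FE p1 M m + N_HPO p1 M m = m"
  unfolding N_FE_def N_HPO_def
  by (induction m) (auto simp: Let_def split: prod.splits)

lemma N_FE_Suc:
  "N_FE p1 M (Suc m) =
     (if real (N_FE p1 M m) < FE_threshold p1 M m then N_FE p1 M m + 1 else N_FE p1 M m)"
proof -
  obtain nf nh where c: "counts p1 M m = (nf, nh)" by (cases "counts p1 M m")
  have nh: "real nh = real m - real nf"
    using N_FE_add_N_HPO[of p1 M m] c unfolding N_FE_def N_HPO_def by auto
  let ?a = "omega_FE p1 M m" and ?b = "omega_HPO p1 M m"
  have "?a / (1 + real nf) > ?b / (1 + real nh) \<longleftrightarrow> ?a * (1 + real nh) > ?b * (1 + real nf)"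
    by (simp add: divide_simps add_pos_pos)
  also have "\<dots> \<longleftrightarrow> real nf < FE_threshold p1 M m"
    unfolding nh FE_threshold_def by (simp add: omega_HPO_def omega_FE_def algebra_simps)
  finally show ?thesis using c by (simp add: N_FE_def Let_def)
qed

lemma counter_below_threshold_tracks:
  fixes g :: "nat \<Rightarrow> real" and n :: "nat \<Rightarrow> nat"
  assumes n_0: "n 0 = 0"
    and n_Suc: "\<And>m. n (Suc m) = (if real (n m) < g m then n m + 1 else n m)"
    and g_0: "\<bar>g 0\<bar> \<le> 1"
    and g_Suc: "\<And>m. m < K \<Longrightarrow> g m \<le> g (Suc m) \<and> g (Suc m) \<le> g m + 1"
    and "m \<le> K"
  shows "g m \<le> real (n (Suc m)) \<and> real (n (Suc m)) \<le> g m + 1"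
  using \<open>m \<le> K\<close>
proof (induction m)
  case 0
  show ?case using n_0 n_Suc[of 0] g_0 by auto
next
  case (Suc m)
  then have "g m \<le> real (n (Suc m)) \<and> real (n (Suc m)) \<le> g m + 1"
    and "g m \<le> g (Suc m) \<and> g (Suc m) \<le> g m + 1"
    using g_Suc by auto
  then show ?case using n_Suc[of "Suc m"] by auto
qed

lemma FE_threshold_Suc_bounds:
  assumes "1/2 \<le> p1" "p1 \<le> 1" "Suc m < M"
  shows "FE_threshold p1 M m \<le> FE_threshold p1 M (Suc m)
       \<and> FE_threshold p1 M (Suc m) \<le> FE_threshold p1 M m + 1"
proof -
  let ?d = "delta p1 M"
  have d_nonneg: "?d \<ge> 0" using assms(1) by (simp add: delta_def)
  have "?d * (2 * real m + 3) \<le> ?d * (2 * real M)"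
    using d_nonneg assms(3) by (intro mult_left_mono) auto
  also have "\<dots> = 2 * p1 - 1" using assms(3) by (simp add: delta_def)
  finally have "?d * (2 * real m + 3) \<le> 2 * p1 - 1" .
  moreover have "FE_threshold p1 M (Suc m) - FE_threshold p1 M m = p1 - ?d * (2 * real m + 3)"
    by (simp add: FE_threshold_def omega_FE_def algebra_simps)
  moreover have "0 \<le> ?d * (2 * real m + 3)" using d_nonneg by simp
  ultimately show ?thesis using assms(2) by linarith
qed

lemma FE_threshold_last_bounds:
  assumes "M \<ge> 1" "1/2 \<le> p1" "p1 < (2 * real M + 1) / (2 * real M + 2)"
  shows "real M - 1 \<le> 2 * FE_threshold p1 M (M - 1)" "2 * FE_threshold p1 M (M - 1) < real M"
proof -
  define d where "d = delta p1 M"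
  have p1: "p1 = d * real M + 1/2" using assms(1) by (simp add: d_def delta_def)
  have last: "2 * FE_threshold p1 M (M - 1) = real M - 1 + 2 * (d * (real M + 1))"
    unfolding FE_threshold_def omega_FE_def d_def[symmetric]
    using assms(1) by (simp add: of_nat_diff p1 field_simps)
  have "p1 * (2 * real M + 2) < 2 * real M + 1"
    using assms(3) by (simp add: pos_less_divide_eq add_pos_pos)
  then have "(p1 - 1/2) * (real M + 1) < real M / 2" by (simp add: field_simps)
  then have "d * (real M + 1) < (real M / 2) / real M"
    using assms(1) by (simp add: d_def delta_def divide_strict_right_mono)
  moreover have "0 \<le> d * (real M + 1)" using assms(2) by (simp add: d_def delta_def)
  ultimately show "real M - 1 \<le> 2 * FE_threshold p1 M (M - 1)"
    "2 * FE_threshold p1 M (M - 1) < real M"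
    using assms(1) unfolding last by simp_all
qed

lemma N_FE_near_half:
  assumes "M \<ge> 1" "1/2 \<le> p1" "p1 < (2 * real M + 1) / (2 * real M + 2)"
  shows "M \<le> 2 * N_FE p1 M M + 1" "2 * N_FE p1 M M \<le> M + 1"
proof -
  let ?g = "FE_threshold p1 M"
  have "(2 * real M + 1) / (2 * real M + 2) < 1" by (simp add: divide_less_eq_1)
  then have "p1 < 1" using assms(3) by linarith
  have "?g (M - 1) \<le> real (N_FE p1 M (Suc (M - 1)))
      \<and> real (N_FE p1 M (Suc (M - 1))) \<le> ?g (M - 1) + 1"
  proof (rule counter_below_threshold_tracks[where K = "M - 1"])
    show "N_FE p1 M 0 = 0" by (simp add: N_FE_def)
    show "N_FE p1 M (Suc m) =
        (if real (N_FE p1 M m) < ?g m then N_FE p1 M m + 1 else N_FE p1 M m)" for m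
      by (rule N_FE_Suc)
    show "\<bar>?g 0\<bar> \<le> 1"
      using assms(2) \<open>p1 < 1\<close> by (simp add: FE_threshold_def omega_FE_def)
    show "?g m \<le> ?g (Suc m) \<and> ?g (Suc m) \<le> ?g m + 1" if "m < M - 1" for m
      using assms(2) \<open>p1 < 1\<close> that by (intro FE_threshold_Suc_bounds) auto
  qed simp
  moreover have "Suc (M - 1) = M" using assms(1) by simp
  ultimately have "?g (M - 1) \<le> real (N_FE p1 M M)" "real (N_FE p1 M M) \<le> ?g (M - 1) + 1"
    by simp_all
  then have "real M \<le> real (2 * N_FE p1 M M + 1)" "real (2 * N_FE p1 M M) < real (M + 2)"
    using FE_threshold_last_bounds[OF assms] by simp_all
  then show "M \<le> 2 * N_FE p1 M M + 1" "2 * N_FE p1 M M \<le> M + 1" by simp_all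
qed

lemma nat_near_half_floor_ceiling:
  fixes n M :: nat
  assumes "M \<le> 2 * n + 1" "2 * n \<le> M + 1"
  shows "real n \<in> {of_int \<lfloor>real M / 2\<rfloor>, of_int \<lceil>real M / 2\<rceil>}"
proof (cases "even M")
  case True
  then obtain k where "M = 2 * k" by blast
  moreover from this have "n = k" using assms by linarith
  ultimately show ?thesis by simp
next
  case False
  then obtain k where M: "M = 2 * k + 1" using oddE by blast
  then have "\<lfloor>real M / 2\<rfloor> = int k" "\<lceil>real M / 2\<rceil> = int k + 1"
    by (simp_all add: floor_eq_iff ceiling_eq_iff)
  moreover have "n = k \<or> n = k + 1" using assms M by linarith
  ultimately show ?thesis by auto
qed

theorem theorem1:
  fixes M :: nat and p1 :: real
  assumes "M \<ge> 1"
    and "1/2 \<le> p1"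
    and "p1 < (real M + 3/2) / (real M + 3)"
  shows "real (N_FE p1 M M) \<in> {of_int \<lfloor>real M / 2\<rfloor>, of_int \<lceil>real M / 2\<rceil>}
       \<and> real (N_HPO p1 M M) \<in> {of_int \<lfloor>real M / 2\<rfloor>, of_int \<lceil>real M / 2\<rceil>}"
proof -
  have "p1 < (2 * real M + 1) / (2 * real M + 2)"
    using assms(3) by (rule less_le_trans) (simp add: field_simps)
  note FE = N_FE_near_half[OF assms(1,2) this]
  moreover have "N_HPO p1 M M = M - N_FE p1 M M" using N_FE_add_N_HPO[of p1 M M] by simp
  ultimately have HPO: "M \<le> 2 * N_HPO p1 M M + 1" "2 * N_HPO p1 M M \<le> M + 1" by auto
  show ?thesis using nat_near_half_floor_ceiling[OF FE] nat_near_half_floor_ceiling[OF HPO] ..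
qed

end
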